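(* Let $\alpha\in(0,1)$. Let $K\in\operatorname{Lip}(\Delta)$ be nonvanishing at the diagonal. There is $\eta\in[0,1)$ depending only on $\alpha$, $\inf_x|K(x,x)|$, $\sup_\Delta|K|$, and $\operatorname{lip}_1(K)$ so that $I^\alpha_K\colon L^1_\eta\to L^1_\eta$ is injective. The result remains true if $\eta$ is increased.
   Context: Let $\Delta=\{(x,y);0\leq x\leq y\leq 1\}$; $\operatorname{Lip}(\Delta)$ is the space of Lipschitz functions $\Delta\to\mathbb R$ and $\operatorname{lip}_1$ the Lipschitz constant in the first variable. $I^\alpha_K f(x)=\int_x^1(y-x)^{-\alpha}K(x,y)f(y)\,\mathrm dy$, and $L^1_\eta=L^1([\eta,1])$ (the transform acting on functions on $[\eta,1]$). *)

theory Defs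
  imports "HOL-Analysis.Analysis"
begin

definition Delta :: "(real \<times> real) set" where
  "Delta = {(x, y). 0 \<le> x \<and> x \<le> y \<and> y \<le> 1}"

definition Lip_Delta :: "(real \<Rightarrow> real \<Rightarrow> real) \<Rightarrow> bool" where
  "Lip_Delta K \<longleftrightarrow> (\<exists>C. C-lipschitz_on Delta (\<lambda>(x, y). K x y))"

definition diag_inf :: "(real \<Rightarrow> real \<Rightarrow> real) \<Rightarrow> real" where
  "diag_inf K = (INF x\<in>{0..1}. \<bar>K x x\<bar>)"

definition sup_abs :: "(real \<Rightarrow> real \<Rightarrow> real) \<Rightarrow> real" where
  "sup_abs K = (SUP p\<in>Delta. \<bar>K (fst p) (snd p)\<bar>)"

definition lip1 :: "(real \<Rightarrow> real \<Rightarrow> real) \<Rightarrow> real" where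
  "lip1 K = (SUP p\<in>{(x, x', y). (x, y) \<in> Delta \<and> (x', y) \<in> Delta \<and> x \<noteq> x'}.
     \<bar>K (fst p) (snd (snd p)) - K (fst (snd p)) (snd (snd p))\<bar> / \<bar>fst p - fst (snd p)\<bar>)"

definition frac_op :: "real \<Rightarrow> (real \<Rightarrow> real \<Rightarrow> real) \<Rightarrow> (real \<Rightarrow> real) \<Rightarrow> real \<Rightarrow> real" where
  "frac_op \<alpha> K f x = (LINT y:{x..1}|lborel. (y - x) powr (-\<alpha>) * K x y * f y)"

definition inj_L1 :: "real \<Rightarrow> (real \<Rightarrow> real \<Rightarrow> real) \<Rightarrow> real \<Rightarrow> bool" where
  "inj_L1 \<alpha> K \<eta> \<longleftrightarrow>
     (\<forall>f g. set_integrable lborel {\<eta>..1} f \<longrightarrow> set_integrable lborel {\<eta>..1} g \<longrightarrow>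
        (AE x in lborel. x \<in> {\<eta>..1} \<longrightarrow> frac_op \<alpha> K f x = frac_op \<alpha> K g x) \<longrightarrow>
        (AE x in lborel. x \<in> {\<eta>..1} \<longrightarrow> f x = g x))"

end

theory Submission
  imports Defs
begin

(* Applying I^(1-alpha) to I^alpha_K f gives, by Fubini, an integral operator with the bounded kernel
   k(x, y) = int_0^1 s^(alpha-1) (1-s)^(-alpha) K(x + (y-x) s, y) ds, which is (B lip1 K)-Lipschitz
   in x and equals B K(y, y) on the diagonal, B = Beta(alpha, 1-alpha). If I^alpha_K h = 0 on
   [eta, 1], then int_x^1 h k(x, .) = 0 for every x, and comparing these identities at x = u and
   x = v bounds every increment int_u^v h(y) K(y, y) dy by 2 lip1 K (v - u) |h|_1. Riemann sums turn
   this into |int h phi| <= 2 lip1 K (1 - eta) |h|_1 / inf |K(x, x)| for continuous |phi| <= 1, and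
   duality gives inf |K(x, x)| |h|_1 <= 2 lip1 K (1 - eta) |h|_1, so h = 0 once eta is close to 1. *)

lemma Delta_iff [simp]: "(x, y) \<in> Delta \<longleftrightarrow> 0 \<le> x \<and> x \<le> y \<and> y \<le> 1"
  by (simp add: Delta_def)

lemma compact_Delta: "compact Delta"
proof -
  have "Delta = ({0..1} \<times> {0..1}) \<inter> {p. fst p \<le> snd p}"
    by (auto simp: Delta_def)
  moreover have "compact (({0..1::real} \<times> {0..1::real}) \<inter> {p. fst p \<le> snd p})"
    by (intro compact_Int_closed compact_Times compact_Icc closed_Collect_le continuous_intros)
  ultimately show ?thesis by simp
qed

lemma Lip_Delta_continuous_on:
  assumes "Lip_Delta K"
  shows "continuous_on Delta (\<lambda>(x, y). K x y)"
  using assms lipschitz_on_continuous_on by (auto simp: Lip_Delta_def)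

lemma Lip_Delta_continuous_on_compose:
  assumes "Lip_Delta K" "continuous_on S p" "continuous_on S q" "\<And>s. s \<in> S \<Longrightarrow> (p s, q s) \<in> Delta"
  shows "continuous_on S (\<lambda>s. K (p s) (q s))"
  using continuous_on_compose2[OF Lip_Delta_continuous_on[OF assms(1)] continuous_on_Pair[OF assms(2,3)]]
    assms(4) by (simp add: image_subset_iff)

lemma Lip_Delta_continuous_on_diag:
  assumes "Lip_Delta K"
  shows "continuous_on {0..1} (\<lambda>x. K x x)"
  by (rule Lip_Delta_continuous_on_compose[OF assms]) (auto intro: continuous_intros)

lemma abs_le_sup_abs:
  assumes "Lip_Delta K" "(x, y) \<in> Delta"
  shows "\<bar>K x y\<bar> \<le> sup_abs K"
proof -
  have "continuous_on Delta (\<lambda>p. K (fst p) (snd p))"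
    by (rule Lip_Delta_continuous_on_compose[OF assms(1)]) (auto intro: continuous_intros)
  then have "continuous_on Delta (\<lambda>p. \<bar>K (fst p) (snd p)\<bar>)"
    by (rule continuous_on_rabs)
  then have "bounded ((\<lambda>p. \<bar>K (fst p) (snd p)\<bar>) ` Delta)"
    by (intro compact_imp_bounded compact_continuous_image compact_Delta)
  from cSUP_upper[OF assms(2) bounded_imp_bdd_above[OF this]] show ?thesis
    by (simp add: sup_abs_def)
qed

lemma sup_abs_nonneg: "Lip_Delta K \<Longrightarrow> 0 \<le> sup_abs K"
  using abs_le_sup_abs[of K 0 0] by (simp add: order_trans[OF abs_ge_zero])

lemma lip1_bdd_above:
  assumes "Lip_Delta K"
  shows "bdd_above ((\<lambda>p. \<bar>K (fst p) (snd (snd p)) - K (fst (snd p)) (snd (snd p))\<bar> / \<bar>fst p - fst (snd p)\<bar>)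
           ` {(x, x', y). (x, y) \<in> Delta \<and> (x', y) \<in> Delta \<and> x \<noteq> x'})"
proof -
  obtain C where C: "C-lipschitz_on Delta (\<lambda>(x, y). K x y)"
    using assms by (auto simp: Lip_Delta_def)
  show ?thesis
  proof (rule bdd_aboveI2)
    fix p assume "p \<in> {(x, x', y). (x, y) \<in> Delta \<and> (x', y) \<in> Delta \<and> x \<noteq> x'}"
    then obtain a b c where p: "p = (a, b, c)" "(a, c) \<in> Delta" "(b, c) \<in> Delta" "a \<noteq> b"
      by auto
    have "\<bar>K a c - K b c\<bar> \<le> C * \<bar>a - b\<bar>"
      using lipschitz_onD[OF C p(2) p(3)] by (simp add: dist_real_def dist_Pair_Pair)
    with p show "\<bar>K (fst p) (snd (snd p)) - K (fst (snd p)) (snd (snd p))\<bar> / \<bar>fst p - fst (snd p)\<bar> \<le> C"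
      by (simp add: pos_divide_le_eq)
  qed
qed

lemma difference_quotient_le_lip1:
  assumes "Lip_Delta K" "(x, y) \<in> Delta" "(x', y) \<in> Delta" "x \<noteq> x'"
  shows "\<bar>K x y - K x' y\<bar> / \<bar>x - x'\<bar> \<le> lip1 K"
  unfolding lip1_def using cSUP_upper[OF _ lip1_bdd_above[OF assms(1)], of "(x, x', y)"] assms(2-4)
  by simp

lemma lip1_nonneg: "Lip_Delta K \<Longrightarrow> 0 \<le> lip1 K"
  using difference_quotient_le_lip1[of K 0 1 1] by (simp add: order_trans[OF abs_ge_zero])

lemma abs_diff_le_lip1:
  assumes "Lip_Delta K" "(x, y) \<in> Delta" "(x', y) \<in> Delta"
  shows "\<bar>K x y - K x' y\<bar> \<le> lip1 K * \<bar>x - x'\<bar>"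
proof (cases "x = x'")
  case False
  then show ?thesis
    using difference_quotient_le_lip1[OF assms False] by (simp add: pos_divide_le_eq)
qed (simp add: lip1_nonneg[OF assms(1)])

lemma diag_inf_le:
  assumes "x \<in> {0..1}"
  shows "diag_inf K \<le> \<bar>K x x\<bar>"
  unfolding diag_inf_def by (rule cINF_lower[OF bdd_belowI2[where m=0] assms]) simp

lemma diag_inf_pos:
  assumes "Lip_Delta K" "\<forall>x\<in>{0..1}. K x x \<noteq> 0"
  shows "0 < diag_inf K"
proof -
  have c: "continuous_on {0..1} (\<lambda>x. \<bar>K x x\<bar>)"
    using Lip_Delta_continuous_on_diag[OF assms(1)] by (intro continuous_intros)
  obtain x0 where x0: "x0 \<in> {0..1}" "\<And>x. x \<in> {0..1} \<Longrightarrow> \<bar>K x0 x0\<bar> \<le> \<bar>K x x\<bar>"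
    using continuous_attains_inf[OF compact_Icc _ c] by auto
  have "\<bar>K x0 x0\<bar> \<le> diag_inf K"
    unfolding diag_inf_def by (rule cINF_greatest) (auto intro: x0(2))
  moreover have "0 < \<bar>K x0 x0\<bar>" using assms(2) x0(1) by simp
  ultimately show ?thesis by simp
qed

lemma set_integral_mult_bounded:
  fixes h \<phi> :: "real \<Rightarrow> real"
  assumes hi: "set_integrable lborel A h"
    and m: "(\<lambda>y. indicator A y *\<^sub>R \<phi> y) \<in> borel_measurable borel"
    and b: "AE y in lborel. y \<in> A \<longrightarrow> \<bar>\<phi> y\<bar> \<le> P" and P: "0 \<le> P"
  shows "set_integrable lborel A (\<lambda>y. h y * \<phi> y)"
    and "\<bar>LINT y:A|lborel. h y * \<phi> y\<bar> \<le> P * (LINT y:A|lborel. \<bar>h y\<bar>)"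
proof -
  have hint: "integrable lborel (\<lambda>y. indicator A y *\<^sub>R h y)"
    using hi unfolding set_integrable_def .
  have "(\<lambda>y. (indicator A y *\<^sub>R h y) * (indicator A y *\<^sub>R \<phi> y)) \<in> borel_measurable lborel"
    using borel_measurable_integrable[OF hint] m by simp
  moreover have "(\<lambda>y. (indicator A y *\<^sub>R h y) * (indicator A y *\<^sub>R \<phi> y)) = (\<lambda>y. indicator A y *\<^sub>R (h y * \<phi> y))"
    by (simp add: indicator_def fun_eq_iff)
  ultimately have mp: "(\<lambda>y. indicator A y *\<^sub>R (h y * \<phi> y)) \<in> borel_measurable lborel"
    by simp
  have gint: "integrable lborel (\<lambda>y. P * norm (indicator A y *\<^sub>R h y))"
    by (intro integrable_mult_right integrable_norm hint)
  have bnd: "AE y in lborel. norm (indicator A y *\<^sub>R (h y * \<phi> y)) \<le> P * norm (indicator A y *\<^sub>R h y)"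
    using b
  proof (rule eventually_mono)
    fix y assume y: "y \<in> A \<longrightarrow> \<bar>\<phi> y\<bar> \<le> P"
    show "norm (indicator A y *\<^sub>R (h y * \<phi> y)) \<le> P * norm (indicator A y *\<^sub>R h y)"
    proof (cases "y \<in> A")
      case True
      then have "\<bar>h y\<bar> * \<bar>\<phi> y\<bar> \<le> \<bar>h y\<bar> * P"
        using y by (intro mult_left_mono) auto
      then show ?thesis using True by (simp add: abs_mult mult.commute)
    qed simp
  qed
  have int: "integrable lborel (\<lambda>y. indicator A y *\<^sub>R (h y * \<phi> y))"
    by (rule Bochner_Integration.integrable_bound[OF gint mp])
       (use bnd P in \<open>auto elim!: eventually_mono\<close>)
  then show "set_integrable lborel A (\<lambda>y. h y * \<phi> y)"
    unfolding set_integrable_def .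
  have "\<bar>LINT y:A|lborel. h y * \<phi> y\<bar> \<le> (\<integral>y. norm (indicator A y *\<^sub>R (h y * \<phi> y)) \<partial>lborel)"
    unfolding set_lebesgue_integral_def by (metis integral_norm_bound real_norm_def)
  also have "\<dots> \<le> (\<integral>y. P * norm (indicator A y *\<^sub>R h y) \<partial>lborel)"
    by (rule integral_mono_AE[OF integrable_norm[OF int] gint bnd])
  also have "\<dots> = P * (LINT y:A|lborel. \<bar>h y\<bar>)"
    unfolding set_lebesgue_integral_def by (simp add: indicator_def abs_mult)
  finally show "\<bar>LINT y:A|lborel. h y * \<phi> y\<bar> \<le> P * (LINT y:A|lborel. \<bar>h y\<bar>)" .
qed

lemma set_integral_abs_mono_set:
  fixes h :: "real \<Rightarrow> real"
  assumes "set_integrable lborel B h" "A \<in> sets borel" "A \<subseteq> B"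
  shows "(LINT y:A|lborel. \<bar>h y\<bar>) \<le> (LINT y:B|lborel. \<bar>h y\<bar>)"
proof -
  have hA: "integrable lborel (\<lambda>y. indicator A y *\<^sub>R h y)"
    using set_integrable_subset[OF assms(1) _ assms(3)] assms(2) unfolding set_integrable_def by simp
  have hB: "integrable lborel (\<lambda>y. indicator B y *\<^sub>R h y)"
    using assms(1) unfolding set_integrable_def .
  show ?thesis unfolding set_lebesgue_integral_def
    by (rule integral_mono)
       (use integrable_norm[OF hA] integrable_norm[OF hB] assms(3) in \<open>auto simp: indicator_def abs_mult\<close>)
qed

definition beta_weight :: "real \<Rightarrow> real \<Rightarrow> real" where
  "beta_weight \<alpha> s = s powr (\<alpha> - 1) * (1 - s) powr (- \<alpha>)"

lemma beta_weight_nonneg: "0 \<le> beta_weight \<alpha> s"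
  by (simp add: beta_weight_def)

lemma beta_weight_eq: "beta_weight \<alpha> = (\<lambda>t. t powr (\<alpha> - 1) * (1 - t) powr ((1 - \<alpha>) - 1))"
  by (simp add: beta_weight_def fun_eq_iff)

lemma set_integrable_beta_weight:
  "0 < \<alpha> \<Longrightarrow> \<alpha> < 1 \<Longrightarrow> set_integrable lborel {0..1} (beta_weight \<alpha>)"
  unfolding beta_weight_eq by (rule integrable_Beta) auto

lemma set_integral_beta_weight:
  assumes "0 < \<alpha>" "\<alpha> < 1"
  shows "(LINT s:{0..1}|lborel. beta_weight \<alpha> s) = Beta \<alpha> (1 - \<alpha>)"
proof -
  have "(LINT s:{0..1}|lborel. beta_weight \<alpha> s) = integral {0..1} (beta_weight \<alpha>)"
    by (rule set_borel_integral_eq_integral(2)[OF set_integrable_beta_weight[OF assms]])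
  also have "\<dots> = Beta \<alpha> (1 - \<alpha>)"
    unfolding beta_weight_eq by (rule integral_unique, rule has_integral_Beta_real) (use assms in auto)
  finally show ?thesis .
qed

lemma Beta_complement_pos: "0 < (\<alpha>::real) \<Longrightarrow> \<alpha> < 1 \<Longrightarrow> 0 < Beta \<alpha> (1 - \<alpha>)"
  by (simp add: Beta_def)

lemma beta_weight_mult_bounded:
  assumes a: "0 < \<alpha>" "\<alpha> < 1" and c: "continuous_on {0..1} \<psi>" and b: "\<forall>s\<in>{0..1}. \<bar>\<psi> s\<bar> \<le> P"
  shows "set_integrable lborel {0..1} (\<lambda>s. beta_weight \<alpha> s * \<psi> s)"
    and "\<bar>LINT s:{0..1}|lborel. beta_weight \<alpha> s * \<psi> s\<bar> \<le> Beta \<alpha> (1 - \<alpha>) * P"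
proof -
  have P: "0 \<le> P" using b by (meson abs_ge_zero atLeastAtMost_iff order_trans zero_le_one order_refl)
  have m: "(\<lambda>s. indicator {0..1} s *\<^sub>R \<psi> s) \<in> borel_measurable borel"
    by (rule borel_measurable_continuous_on_indicator[OF _ c]) simp
  have b': "AE s in lborel. s \<in> {0..1} \<longrightarrow> \<bar>\<psi> s\<bar> \<le> P"
    using b by simp
  note bound = set_integral_mult_bounded[OF set_integrable_beta_weight[OF a] m b' P]
  show "set_integrable lborel {0..1} (\<lambda>s. beta_weight \<alpha> s * \<psi> s)"
    by (rule bound(1))
  show "\<bar>LINT s:{0..1}|lborel. beta_weight \<alpha> s * \<psi> s\<bar> \<le> Beta \<alpha> (1 - \<alpha>) * P"
    using bound(2) set_integral_beta_weight[OF a] by (simp add: beta_weight_nonneg mult.commute)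
qed

lemma beta_substitution_eq:
  assumes "x < y"
  shows "\<bar>y - x\<bar> * (indicator {x..y} (x + (y - x) * s) *
      ((x + (y - x) * s - x) powr (\<alpha> - 1) * (y - (x + (y - x) * s)) powr (- \<alpha>) * \<phi> (x + (y - x) * s)))
    = indicator {0..1} s * (beta_weight \<alpha> s * \<phi> (x + (y - x) * s))"
proof -
  define d where "d = y - x"
  have d: "d > 0" using assms by (simp add: d_def)
  have ind: "indicator {x..y} (x + d * s) = (indicator {0..1} s :: real)"
  proof -
    have yd: "y = x + d" by (simp add: d_def)
    have "x \<le> x + d * s \<longleftrightarrow> 0 \<le> s" using d by (simp add: zero_le_mult_iff)
    moreover have "x + d * s \<le> y \<longleftrightarrow> s \<le> 1" unfolding yd using d by simp
    ultimately have "x + d * s \<in> {x..y} \<longleftrightarrow> s \<in> {0..1}" by auto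
    then show ?thesis by (simp add: indicator_def)
  qed
  show ?thesis
  proof (cases "s \<in> {0..1}")
    case False
    then show ?thesis using ind by (simp add: d_def[symmetric])
  next
    case True
    have e1: "x + d * s - x = d * s" by simp
    have e2: "y - (x + d * s) = d * (1 - s)" by (simp add: d_def algebra_simps)
    have p1: "(d * s) powr (\<alpha> - 1) = d powr (\<alpha> - 1) * s powr (\<alpha> - 1)"
      using True d by (metis atLeastAtMost_iff diff_ge_0_iff_ge less_eq_real_def powr_mult)
    have p2: "(d * (1 - s)) powr (- \<alpha>) = d powr (- \<alpha>) * (1 - s) powr (- \<alpha>)"
      using True d by (metis atLeastAtMost_iff diff_ge_0_iff_ge less_eq_real_def powr_mult)
    have p3: "d * (d powr (\<alpha> - 1) * d powr (- \<alpha>)) = 1"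
    proof -
      have "d powr (\<alpha> - 1) * d powr (- \<alpha>) = d powr (-1)" by (simp add: powr_add[symmetric])
      also have "\<dots> = 1 / d" using d by (simp add: powr_minus_divide)
      finally show ?thesis using d by simp
    qed
    have "\<bar>d\<bar> * (indicator {x..y} (x + d * s) *
      ((x + d * s - x) powr (\<alpha> - 1) * (y - (x + d * s)) powr (- \<alpha>) * \<phi> (x + d * s)))
      = (d * (d powr (\<alpha> - 1) * d powr (- \<alpha>))) * (s powr (\<alpha> - 1) * (1 - s) powr (- \<alpha>) * \<phi> (x + d * s))"
      using True d ind unfolding e1 e2 p1 p2 by (simp add: indicator_def)
    also have "\<dots> = indicator {0..1} s * (beta_weight \<alpha> s * \<phi> (x + d * s))"
      using True p3 by (simp add: beta_weight_def)
    finally show ?thesis by (simp add: d_def)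
  qed
qed

lemma set_integral_beta_substitution:
  assumes "x < y"
  shows "(LINT t:{x..y}|lborel. (t - x) powr (\<alpha> - 1) * (y - t) powr (- \<alpha>) * \<phi> t)
       = (LINT s:{0..1}|lborel. beta_weight \<alpha> s * \<phi> (x + (y - x) * s))"
proof -
  have ne: "y - x \<noteq> 0" using assms by simp
  define F where "F = (\<lambda>t. indicator {x..y} t * ((t - x) powr (\<alpha> - 1) * (y - t) powr (- \<alpha>) * \<phi> t))"
  have L: "integral\<^sup>L lborel F = \<bar>y - x\<bar> *\<^sub>R (\<integral>s. F (x + (y - x) * s) \<partial>lborel)"
    by (rule lborel_integral_real_affine[OF ne])
  have L2: "\<bar>y - x\<bar> *\<^sub>R (\<integral>s. F (x + (y - x) * s) \<partial>lborel) = (\<integral>s. \<bar>y - x\<bar> * F (x + (y - x) * s) \<partial>lborel)"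
    by (simp only: real_scaleR_def integral_mult_right_zero)
  have E: "(\<lambda>s. \<bar>y - x\<bar> * F (x + (y - x) * s)) = (\<lambda>s. indicator {0..1} s * (beta_weight \<alpha> s * \<phi> (x + (y - x) * s)))"
    unfolding F_def by (rule ext) (rule beta_substitution_eq[OF assms])
  have G1: "(LINT t:{x..y}|lborel. (t - x) powr (\<alpha> - 1) * (y - t) powr (- \<alpha>) * \<phi> t) = integral\<^sup>L lborel F"
    unfolding set_lebesgue_integral_def F_def by simp
  have G2: "(LINT s:{0..1}|lborel. beta_weight \<alpha> s * \<phi> (x + (y - x) * s)) =
     (\<integral>s. indicator {0..1} s * (beta_weight \<alpha> s * \<phi> (x + (y - x) * s)) \<partial>lborel)"
    unfolding set_lebesgue_integral_def by simp
  show ?thesis unfolding G1 G2 L L2 E ..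
qed

lemma set_integrable_beta_substitution_iff:
  assumes "x < y"
  shows "set_integrable lborel {x..y} (\<lambda>t. (t - x) powr (\<alpha> - 1) * (y - t) powr (- \<alpha>) * \<phi> t)
     \<longleftrightarrow> set_integrable lborel {0..1} (\<lambda>s. beta_weight \<alpha> s * \<phi> (x + (y - x) * s))"
proof -
  have ne: "y - x \<noteq> 0" using assms by simp
  define F where "F = (\<lambda>t. indicator {x..y} t * ((t - x) powr (\<alpha> - 1) * (y - t) powr (- \<alpha>) * \<phi> t))"
  have L: "integrable lborel (\<lambda>s. F (x + (y - x) * s)) \<longleftrightarrow> integrable lborel F"
    by (rule lborel_integrable_real_affine_iff[OF ne])
  have L2: "integrable lborel (\<lambda>s. \<bar>y - x\<bar> * F (x + (y - x) * s)) \<longleftrightarrow> integrable lborel (\<lambda>s. F (x + (y - x) * s))"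
    using ne by (subst integrable_mult_left_iff) simp
  have E: "(\<lambda>s. \<bar>y - x\<bar> * F (x + (y - x) * s)) = (\<lambda>s. indicator {0..1} s * (beta_weight \<alpha> s * \<phi> (x + (y - x) * s)))"
    unfolding F_def by (rule ext) (rule beta_substitution_eq[OF assms])
  have G1: "set_integrable lborel {x..y} (\<lambda>t. (t - x) powr (\<alpha> - 1) * (y - t) powr (- \<alpha>) * \<phi> t) \<longleftrightarrow> integrable lborel F"
    unfolding set_integrable_def F_def by simp
  have G2: "set_integrable lborel {0..1} (\<lambda>s. beta_weight \<alpha> s * \<phi> (x + (y - x) * s)) \<longleftrightarrow>
     integrable lborel (\<lambda>s. indicator {0..1} s * (beta_weight \<alpha> s * \<phi> (x + (y - x) * s)))"
    unfolding set_integrable_def by simp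
  show ?thesis using L L2[unfolded E] G1 G2 by blast
qed

lemma segment_in_Delta:
  assumes "0 \<le> x" "x \<le> y" "y \<le> 1" "s \<in> {0..1}"
  shows "(x + (y - x) * s, y) \<in> Delta"
proof -
  have "(y - x) * s \<le> (y - x) * 1" using assms by (intro mult_left_mono) auto
  moreover have "0 \<le> (y - x) * s" using assms by simp
  ultimately show ?thesis using assms by simp
qed

lemma Lip_Delta_continuous_on_segment:
  assumes "Lip_Delta K" "0 \<le> x" "x \<le> y" "y \<le> 1"
  shows "continuous_on {0..1} (\<lambda>s. K (x + (y - x) * s) y)"
  by (rule Lip_Delta_continuous_on_compose[OF assms(1)])
     (auto intro!: continuous_intros segment_in_Delta[OF assms(2-4)] simp del: Delta_iff)

text \<open>The kernel of the composition \<open>I\<^sup>1\<^sup>-\<^sup>\<alpha> \<circ> I\<^sup>\<alpha>\<^sub>K\<close>: the integral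
  \<open>\<integral>\<^sub>x\<^sup>y (t - x)\<^sup>\<alpha>\<^sup>-\<^sup>1 (y - t)\<^sup>-\<^sup>\<alpha> K t y dt\<close> after the substitution \<open>t = x + (y - x) s\<close>.
  On the diagonal it equals \<open>Beta \<alpha> (1 - \<alpha>) * K y y\<close>.\<close>
definition composite_kernel :: "real \<Rightarrow> (real \<Rightarrow> real \<Rightarrow> real) \<Rightarrow> real \<Rightarrow> real \<Rightarrow> real" where
  "composite_kernel \<alpha> K x y = (LINT s:{0..1}|lborel. beta_weight \<alpha> s * K (x + (y - x) * s) y)"

context
  fixes \<alpha> :: real and K :: "real \<Rightarrow> real \<Rightarrow> real"
  assumes \<alpha>: "0 < \<alpha>" "\<alpha> < 1" and LK: "Lip_Delta K"
begin

lemma composite_kernel_integrable: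
  assumes "0 \<le> x" "x \<le> y" "y \<le> 1"
  shows "set_integrable lborel {0..1} (\<lambda>s. beta_weight \<alpha> s * K (x + (y - x) * s) y)"
  using abs_le_sup_abs[OF LK segment_in_Delta[OF assms]]
  by (intro beta_weight_mult_bounded(1)[OF \<alpha> Lip_Delta_continuous_on_segment[OF LK assms]]) blast

lemma abs_composite_kernel_le:
  assumes "0 \<le> x" "x \<le> y" "y \<le> 1"
  shows "\<bar>composite_kernel \<alpha> K x y\<bar> \<le> Beta \<alpha> (1 - \<alpha>) * sup_abs K"
  unfolding composite_kernel_def using abs_le_sup_abs[OF LK segment_in_Delta[OF assms]]
  by (intro beta_weight_mult_bounded(2)[OF \<alpha> Lip_Delta_continuous_on_segment[OF LK assms]]) blast

lemma composite_kernel_diff: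
  assumes "0 \<le> x" "x \<le> y" "y \<le> 1" "0 \<le> x'" "x' \<le> y'" "y' \<le> 1"
  shows "composite_kernel \<alpha> K x y - composite_kernel \<alpha> K x' y'
    = (LINT s:{0..1}|lborel. beta_weight \<alpha> s * (K (x + (y - x) * s) y - K (x' + (y' - x') * s) y'))"
  unfolding composite_kernel_def right_diff_distrib
  by (rule set_integral_diff(2)[symmetric, OF composite_kernel_integrable[OF assms(1-3)]
        composite_kernel_integrable[OF assms(4-6)]])

lemma composite_kernel_lipschitz:
  assumes "0 \<le> x" "x \<le> y" "y \<le> 1" "0 \<le> x'" "x' \<le> y"
  shows "\<bar>composite_kernel \<alpha> K x y - composite_kernel \<alpha> K x' y\<bar> \<le> Beta \<alpha> (1 - \<alpha>) * (lip1 K * \<bar>x - x'\<bar>)"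
proof -
  have x'y: "0 \<le> x'" "x' \<le> y" "y \<le> 1" using assms by auto
  have "\<bar>K (x + (y - x) * s) y - K (x' + (y - x') * s) y\<bar> \<le> lip1 K * \<bar>x - x'\<bar>" if s: "s \<in> {0..1}" for s
  proof -
    have "\<bar>K (x + (y - x) * s) y - K (x' + (y - x') * s) y\<bar> \<le> lip1 K * \<bar>(x + (y - x) * s) - (x' + (y - x') * s)\<bar>"
      by (rule abs_diff_le_lip1[OF LK segment_in_Delta[OF assms(1-3) s] segment_in_Delta[OF x'y s]])
    also have "\<bar>(x + (y - x) * s) - (x' + (y - x') * s)\<bar> = \<bar>x - x'\<bar> * (1 - s)"
    proof -
      have "(x + (y - x) * s) - (x' + (y - x') * s) = (x - x') * (1 - s)" by (simp add: algebra_simps)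
      then show ?thesis using s by (simp add: abs_mult)
    qed
    also have "lip1 K * (\<bar>x - x'\<bar> * (1 - s)) \<le> lip1 K * \<bar>x - x'\<bar>"
      using s lip1_nonneg[OF LK] by (intro mult_left_mono mult_left_le) auto
    finally show ?thesis .
  qed
  then show ?thesis unfolding composite_kernel_diff[OF assms(1-3) x'y]
    by (intro beta_weight_mult_bounded(2)[OF \<alpha>] ballI continuous_intros
        Lip_Delta_continuous_on_segment[OF LK assms(1-3)] Lip_Delta_continuous_on_segment[OF LK x'y])
qed

lemma composite_kernel_near_diag:
  assumes "0 \<le> x" "x \<le> y" "y \<le> 1"
  shows "\<bar>composite_kernel \<alpha> K x y - Beta \<alpha> (1 - \<alpha>) * K y y\<bar> \<le> Beta \<alpha> (1 - \<alpha>) * (lip1 K * (y - x))"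
proof -
  have "composite_kernel \<alpha> K y y = Beta \<alpha> (1 - \<alpha>) * K y y"
    unfolding composite_kernel_def using set_integral_beta_weight[OF \<alpha>] by simp
  then show ?thesis
    using composite_kernel_lipschitz[OF assms, of y] assms by simp
qed

lemma continuous_on_composite_kernel:
  assumes "0 \<le> x" "x \<le> 1"
  shows "continuous_on {x..1} (composite_kernel \<alpha> K x)"
proof -
  obtain C where C: "C-lipschitz_on Delta (\<lambda>(x, y). K x y)"
    using LK by (auto simp: Lip_Delta_def)
  have C0: "0 \<le> C" using C lipschitz_on_nonneg by blast
  have "(Beta \<alpha> (1 - \<alpha>) * (C * 2))-lipschitz_on {x..1} (composite_kernel \<alpha> K x)"
  proof (rule lipschitz_onI)
    fix y y' assume y: "y \<in> {x..1}" and y': "y' \<in> {x..1}"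
    have xy: "0 \<le> x" "x \<le> y" "y \<le> 1" and xy': "0 \<le> x" "x \<le> y'" "y' \<le> 1"
      using y y' assms by auto
    have "\<bar>K (x + (y - x) * s) y - K (x + (y' - x) * s) y'\<bar> \<le> C * 2 * dist y y'" if s: "s \<in> {0..1}" for s
    proof -
      have "dist (K (x + (y - x) * s) y) (K (x + (y' - x) * s) y')
          \<le> C * dist (x + (y - x) * s, y) (x + (y' - x) * s, y')"
        using lipschitz_onD[OF C segment_in_Delta[OF xy s] segment_in_Delta[OF xy' s]] by simp
      also have "dist (x + (y - x) * s, y) (x + (y' - x) * s, y') \<le> \<bar>y - y'\<bar> * s + \<bar>y - y'\<bar>"
      proof -
        have "(x + (y - x) * s) - (x + (y' - x) * s) = (y - y') * s" by (simp add: algebra_simps)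
        then show ?thesis
          using norm_Pair_le[of "(y - y') * s" "y - y'"] s by (simp add: dist_norm abs_mult)
      qed
      also have "\<bar>y - y'\<bar> * s + \<bar>y - y'\<bar> \<le> 2 * dist y y'"
        using s mult_left_le[of s "\<bar>y - y'\<bar>"] by (simp add: dist_real_def)
      finally show ?thesis using C0 by (simp add: dist_real_def mult_left_mono)
    qed
    then have "\<bar>composite_kernel \<alpha> K x y - composite_kernel \<alpha> K x y'\<bar> \<le> Beta \<alpha> (1 - \<alpha>) * (C * 2 * dist y y')"
      unfolding composite_kernel_diff[OF xy xy']
      by (intro beta_weight_mult_bounded(2)[OF \<alpha>] ballI continuous_intros
          Lip_Delta_continuous_on_segment[OF LK xy] Lip_Delta_continuous_on_segment[OF LK xy'])
    then show "dist (composite_kernel \<alpha> K x y) (composite_kernel \<alpha> K x y')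
        \<le> Beta \<alpha> (1 - \<alpha>) * (C * 2) * dist y y'"
      by (simp add: dist_real_def mult.assoc)
  qed (use Beta_complement_pos[OF \<alpha>] C0 in simp)
  then show ?thesis by (rule lipschitz_on_continuous_on)
qed

end

text \<open>The integrand of \<open>\<integral>\<^sub>x\<^sup>1 (t - x)\<^sup>\<alpha>\<^sup>-\<^sup>1 (I\<^sup>\<alpha>\<^sub>K f) t dt\<close> as a function of \<open>(y, t)\<close>.\<close>
definition iterated_integrand ::
    "real \<Rightarrow> (real \<Rightarrow> real \<Rightarrow> real) \<Rightarrow> (real \<Rightarrow> real) \<Rightarrow> real \<Rightarrow> real \<Rightarrow> real \<Rightarrow> real" where
  "iterated_integrand \<alpha> K f x y t = indicator {(y, t). x \<le> t \<and> t \<le> y \<and> y \<le> 1} (y, t) *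
     ((t - x) powr (\<alpha> - 1) * (y - t) powr (- \<alpha>) * K t y * f y)"

context
  fixes \<alpha> :: real and K :: "real \<Rightarrow> real \<Rightarrow> real"
  assumes \<alpha>: "0 < \<alpha>" "\<alpha> < 1" and LK: "Lip_Delta K"
begin

lemma iterated_integrand_measurable:
  assumes x: "0 \<le> x" and fi: "set_integrable lborel {x..1} f"
  shows "case_prod (iterated_integrand \<alpha> K f x) \<in> borel_measurable (lborel \<Otimes>\<^sub>M lborel)"
proof -
  define T where "T = {(y, t). x \<le> t \<and> t \<le> y \<and> y \<le> (1::real)}"
  have closedT: "closed T"
  proof -
    have "T = {p. x \<le> snd p} \<inter> {p. snd p \<le> fst p} \<inter> {p. fst p \<le> 1}"
      by (auto simp: T_def)
    moreover have "closed ({p::real \<times> real. x \<le> snd p} \<inter> {p. snd p \<le> fst p} \<inter> {p. fst p \<le> 1})"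
      by (intro closed_Int closed_Collect_le continuous_intros)
    ultimately show ?thesis by simp
  qed
  have "continuous_on T (\<lambda>p. K (snd p) (fst p))"
    by (rule Lip_Delta_continuous_on_compose[OF LK]) (use x in \<open>auto intro: continuous_intros simp: T_def\<close>)
  then have mK: "(\<lambda>p. indicator T p *\<^sub>R K (snd p) (fst p)) \<in> borel_measurable borel"
    by (rule borel_measurable_continuous_on_indicator[rotated]) (simp add: closedT)
  have mfst: "(fst :: real \<times> real \<Rightarrow> real) \<in> borel_measurable borel"
    and msnd: "(snd :: real \<times> real \<Rightarrow> real) \<in> borel_measurable borel"
    by (auto intro!: borel_measurable_continuous_onI continuous_intros)
  have "(\<lambda>y. indicator {x..1} y *\<^sub>R f y) \<in> borel_measurable borel"
    using fi unfolding set_integrable_def by (simp add: borel_measurable_integrable)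
  from measurable_compose[OF mfst this]
  have mf: "(\<lambda>p::real \<times> real. indicator {x..1} (fst p) *\<^sub>R f (fst p)) \<in> borel_measurable borel"
    by (simp add: o_def)
  have mp: "(\<lambda>p::real \<times> real. (snd p - x) powr (\<alpha> - 1) * (fst p - snd p) powr (- \<alpha>)) \<in> borel_measurable borel"
    by (intro borel_measurable_times powr_real_measurable borel_measurable_diff mfst msnd borel_measurable_const)
  have eq: "case_prod (iterated_integrand \<alpha> K f x) = (\<lambda>p. (indicator T p *\<^sub>R K (snd p) (fst p)) *
      ((snd p - x) powr (\<alpha> - 1) * (fst p - snd p) powr (- \<alpha>)) * (indicator {x..1} (fst p) *\<^sub>R f (fst p)))"
    by (auto simp: iterated_integrand_def T_def indicator_def fun_eq_iff)
  show ?thesis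
    unfolding lborel_prod eq measurable_lborel2 by (intro borel_measurable_times mK mp mf)
qed

lemma iterated_integrand_inner:
  assumes x: "0 \<le> x" and y: "x < y" "y \<le> 1"
  shows "integrable lborel (iterated_integrand \<alpha> K f x y)"
    and "(\<integral>t. iterated_integrand \<alpha> K f x y t \<partial>lborel) = f y * composite_kernel \<alpha> K x y"
    and "(\<integral>t. norm (iterated_integrand \<alpha> K f x y t) \<partial>lborel) \<le> \<bar>f y\<bar> * (Beta \<alpha> (1 - \<alpha>) * sup_abs K)"
proof -
  define G where "G = (\<lambda>t. (t - x) powr (\<alpha> - 1) * (y - t) powr (- \<alpha>) * K t y)"
  define Ga where "Ga = (\<lambda>t. (t - x) powr (\<alpha> - 1) * (y - t) powr (- \<alpha>) * \<bar>K t y\<bar>)"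
  have xy: "0 \<le> x" "x \<le> y" "y \<le> 1" using x y by auto
  have F: "iterated_integrand \<alpha> K f x y t = f y * (indicator {x..y} t * G t)" for t
    using y by (simp add: iterated_integrand_def G_def indicator_def mult_ac)
  have Fn: "norm (iterated_integrand \<alpha> K f x y t) = \<bar>f y\<bar> * (indicator {x..y} t * Ga t)" for t
    unfolding F G_def Ga_def by (simp add: abs_mult indicator_def)
  have "set_integrable lborel {x..y} G"
    unfolding G_def using set_integrable_beta_substitution_iff[OF y(1), of \<alpha> "\<lambda>t. K t y"]
      composite_kernel_integrable[OF \<alpha> LK xy] by simp
  then have "integrable lborel (\<lambda>t. indicator {x..y} t * G t)"
    unfolding set_integrable_def by simp
  then show "integrable lborel (iterated_integrand \<alpha> K f x y)"
    unfolding F by (rule integrable_mult_right)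
  show "(\<integral>t. iterated_integrand \<alpha> K f x y t \<partial>lborel) = f y * composite_kernel \<alpha> K x y"
    unfolding F composite_kernel_def
    using set_integral_beta_substitution[OF y(1), of \<alpha> "\<lambda>t. K t y"]
    by (simp add: set_lebesgue_integral_def G_def)
  have c: "continuous_on {0..1} (\<lambda>s. \<bar>K (x + (y - x) * s) y\<bar>)"
    by (intro continuous_intros Lip_Delta_continuous_on_segment[OF LK xy])
  have b: "\<forall>s\<in>{0..1}. \<bar>\<bar>K (x + (y - x) * s) y\<bar>\<bar> \<le> sup_abs K"
    using abs_le_sup_abs[OF LK segment_in_Delta[OF xy]] by simp
  have "(LINT t:{x..y}|lborel. Ga t) \<le> Beta \<alpha> (1 - \<alpha>) * sup_abs K"
    using beta_weight_mult_bounded(2)[OF \<alpha> c b] set_integral_beta_substitution[OF y(1), of \<alpha> "\<lambda>t. \<bar>K t y\<bar>"]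
    by (simp add: Ga_def)
  then show "(\<integral>t. norm (iterated_integrand \<alpha> K f x y t) \<partial>lborel) \<le> \<bar>f y\<bar> * (Beta \<alpha> (1 - \<alpha>) * sup_abs K)"
    unfolding Fn set_lebesgue_integral_def by (simp add: mult_left_mono)
qed

lemma iterated_integrand_eq_0: "y \<notin> {x..1} \<Longrightarrow> iterated_integrand \<alpha> K f x y = (\<lambda>_. 0)"
  by (auto simp: iterated_integrand_def indicator_def fun_eq_iff)

lemma integrable_iterated_integrand:
  assumes x: "0 \<le> x" and fi: "set_integrable lborel {x..1} f"
  shows "integrable (lborel \<Otimes>\<^sub>M lborel) (case_prod (iterated_integrand \<alpha> K f x))"
proof -
  let ?F = "iterated_integrand \<alpha> K f x"
  define C where "C = Beta \<alpha> (1 - \<alpha>) * sup_abs K"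
  have C: "0 \<le> C" using Beta_complement_pos[OF \<alpha>] sup_abs_nonneg[OF LK] by (simp add: C_def)
  note meas = iterated_integrand_measurable[OF x fi]
  have AEint: "AE y in lborel. integrable lborel (?F y)"
    using AE_lborel_singleton[of x]
  proof (rule eventually_mono)
    fix y assume "y \<noteq> x"
    then show "integrable lborel (?F y)"
      using iterated_integrand_inner(1)[OF x, of y f] iterated_integrand_eq_0[of y x f]
      by (cases "y \<in> {x..1}") auto
  qed
  have "(\<lambda>p. norm (case_prod ?F p)) \<in> borel_measurable (lborel \<Otimes>\<^sub>M lborel)"
    using measurable_compose[OF meas borel_measurable_norm] by (simp add: o_def)
  then have meas_norm: "(\<lambda>y. \<integral>t. norm (?F y t) \<partial>lborel) \<in> borel_measurable lborel"
    by (intro lborel.borel_measurable_lebesgue_integral) (simp add: case_prod_beta)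
  have gint: "integrable lborel (\<lambda>y. C * norm (indicator {x..1} y *\<^sub>R f y))"
    using fi unfolding set_integrable_def by (intro integrable_mult_right integrable_norm)
  have bound: "norm (\<integral>t. norm (?F y t) \<partial>lborel) \<le> norm (C * norm (indicator {x..1} y *\<^sub>R f y))"
    if "y \<noteq> x" for y
  proof (cases "y \<in> {x..1}")
    case True
    have "norm (\<integral>t. norm (?F y t) \<partial>lborel) = (\<integral>t. norm (?F y t) \<partial>lborel)" by simp
    also have "\<dots> \<le> \<bar>f y\<bar> * C"
      using iterated_integrand_inner(3)[OF x, of y f] True that by (simp add: C_def)
    also have "\<dots> = norm (C * norm (indicator {x..1} y *\<^sub>R f y))"
      using True C by (simp add: abs_mult)
    finally show ?thesis .
  qed (simp add: iterated_integrand_eq_0)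
  have "integrable lborel (\<lambda>y. \<integral>t. norm (?F y t) \<partial>lborel)"
    by (rule Bochner_Integration.integrable_bound[OF gint meas_norm])
       (use AE_lborel_singleton[of x] bound in \<open>auto elim!: eventually_mono\<close>)
  then show ?thesis
    using lborel_pair.Fubini_integrable[of "case_prod ?F"] meas AEint by simp
qed

lemma integral_iterated_integrand_fst:
  "(\<integral>y. iterated_integrand \<alpha> K f x y t \<partial>lborel)
     = indicator {x..1} t * ((t - x) powr (\<alpha> - 1) * frac_op \<alpha> K f t)"
proof -
  define c where "c = indicator {x..1} t * (t - x) powr (\<alpha> - 1)"
  have "iterated_integrand \<alpha> K f x y t = c * (indicator {t..1} y *\<^sub>R ((y - t) powr (- \<alpha>) * K t y * f y))" for y
    unfolding iterated_integrand_def c_def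
    by (cases "x \<le> t"; cases "t \<le> y"; cases "y \<le> 1") (simp_all add: indicator_def mult_ac)
  then have "(\<integral>y. iterated_integrand \<alpha> K f x y t \<partial>lborel)
      = c * (\<integral>y. indicator {t..1} y *\<^sub>R ((y - t) powr (- \<alpha>) * K t y * f y) \<partial>lborel)"
    by simp
  then show ?thesis
    unfolding frac_op_def set_lebesgue_integral_def by (simp add: c_def)
qed

lemma borel_measurable_fractional_composition:
  assumes x: "0 \<le> x" and fi: "set_integrable lborel {x..1} f"
  shows "(\<lambda>t. indicator {x..1} t *\<^sub>R ((t - x) powr (\<alpha> - 1) * frac_op \<alpha> K f t)) \<in> borel_measurable borel"
proof -
  have sw: "(\<lambda>p::real \<times> real. (snd p, fst p)) \<in> borel_measurable borel"
    by (intro borel_measurable_continuous_onI continuous_intros)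
  have "case_prod (iterated_integrand \<alpha> K f x) \<in> borel_measurable borel"
    using iterated_integrand_measurable[OF x fi] unfolding lborel_prod measurable_lborel2 .
  from measurable_compose[OF sw this]
  have "(\<lambda>(t, y). iterated_integrand \<alpha> K f x y t) \<in> borel_measurable (lborel \<Otimes>\<^sub>M lborel)"
    unfolding lborel_prod measurable_lborel2 by (simp add: o_def case_prod_beta)
  then have "(\<lambda>t. \<integral>y. iterated_integrand \<alpha> K f x y t \<partial>lborel) \<in> borel_measurable lborel"
    by (rule lborel.borel_measurable_lebesgue_integral)
  then show ?thesis by (simp add: integral_iterated_integrand_fst)
qed

lemma set_integral_fractional_composition:
  assumes x: "0 \<le> x" "x \<le> 1" and fi: "set_integrable lborel {x..1} f"
  shows "(LINT t:{x..1}|lborel. (t - x) powr (\<alpha> - 1) * frac_op \<alpha> K f t)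
       = (LINT y:{x..1}|lborel. f y * composite_kernel \<alpha> K x y)"
proof -
  let ?F = "iterated_integrand \<alpha> K f x"
  have "(LINT t:{x..1}|lborel. (t - x) powr (\<alpha> - 1) * frac_op \<alpha> K f t)
      = (\<integral>t. (\<integral>y. ?F y t \<partial>lborel) \<partial>lborel)"
    by (simp add: set_lebesgue_integral_def integral_iterated_integrand_fst)
  also have "\<dots> = (\<integral>y. (\<integral>t. ?F y t \<partial>lborel) \<partial>lborel)"
    by (rule lborel_pair.Fubini_integral[OF integrable_iterated_integrand[OF x(1) fi]])
  also have "\<dots> = (LINT y:{x..1}|lborel. f y * composite_kernel \<alpha> K x y)"
    unfolding set_lebesgue_integral_def
  proof (rule integral_cong_AE)
    show "(\<lambda>y. \<integral>t. ?F y t \<partial>lborel) \<in> borel_measurable lborel"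
      using iterated_integrand_measurable[OF x(1) fi]
      by (intro lborel.borel_measurable_lebesgue_integral) (simp add: case_prod_beta)
    have mk: "(\<lambda>y. indicator {x..1} y *\<^sub>R composite_kernel \<alpha> K x y) \<in> borel_measurable borel"
      by (rule borel_measurable_continuous_on_indicator[OF _ continuous_on_composite_kernel[OF \<alpha> LK x]]) simp
    have mf: "(\<lambda>y. indicator {x..1} y *\<^sub>R f y) \<in> borel_measurable borel"
      using fi unfolding set_integrable_def by (simp add: borel_measurable_integrable)
    have eq: "(\<lambda>y. (indicator {x..1} y *\<^sub>R composite_kernel \<alpha> K x y) * (indicator {x..1} y *\<^sub>R f y))
        = (\<lambda>y. indicator {x..1} y *\<^sub>R (f y * composite_kernel \<alpha> K x y))"
      by (simp add: fun_eq_iff split: split_indicator)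
    from borel_measurable_times[OF mk mf]
    show "(\<lambda>y. indicator {x..1} y *\<^sub>R (f y * composite_kernel \<alpha> K x y)) \<in> borel_measurable lborel"
      unfolding eq measurable_lborel2 .
    show "AE y in lborel. (\<integral>t. ?F y t \<partial>lborel) = indicator {x..1} y *\<^sub>R (f y * composite_kernel \<alpha> K x y)"
      using AE_lborel_singleton[of x]
    proof (rule eventually_mono)
      fix y assume "y \<noteq> x"
      then show "(\<integral>t. ?F y t \<partial>lborel) = indicator {x..1} y *\<^sub>R (f y * composite_kernel \<alpha> K x y)"
        using iterated_integrand_inner(2)[OF x(1), of y f] iterated_integrand_eq_0[of y x f]
        by (cases "y \<in> {x..1}") auto
    qed
  qed
  finally show ?thesis .
qed

end

context
  fixes \<alpha> :: real and K :: "real \<Rightarrow> real \<Rightarrow> real"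
  assumes \<alpha>: "0 < \<alpha>" "\<alpha> < 1" and LK: "Lip_Delta K"
begin

lemma set_integrable_mult_composite_kernel:
  assumes x: "0 \<le> x" "x \<le> 1" and hi: "set_integrable lborel {x..1} h"
  shows "set_integrable lborel {x..1} (\<lambda>y. h y * composite_kernel \<alpha> K x y)"
proof (rule set_integral_mult_bounded(1)[OF hi])
  show "(\<lambda>y. indicator {x..1} y *\<^sub>R composite_kernel \<alpha> K x y) \<in> borel_measurable borel"
    by (rule borel_measurable_continuous_on_indicator[OF _ continuous_on_composite_kernel[OF \<alpha> LK x]]) simp
  show "AE y in lborel. y \<in> {x..1} \<longrightarrow> \<bar>composite_kernel \<alpha> K x y\<bar> \<le> Beta \<alpha> (1 - \<alpha>) * sup_abs K"
    using abs_composite_kernel_le[OF \<alpha> LK] x by (intro AE_I2) auto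
  show "0 \<le> Beta \<alpha> (1 - \<alpha>) * sup_abs K"
    using Beta_complement_pos[OF \<alpha>] sup_abs_nonneg[OF LK] by simp
qed

lemma set_integral_composite_kernel_eq_0:
  assumes a0: "0 \<le> a0" and fi: "set_integrable lborel {a0..1} f" and gi: "set_integrable lborel {a0..1} g"
    and eq: "AE t in lborel. t \<in> {a0..1} \<longrightarrow> frac_op \<alpha> K f t = frac_op \<alpha> K g t"
    and x: "a0 \<le> x" "x \<le> 1"
  shows "(LINT y:{x..1}|lborel. (f y - g y) * composite_kernel \<alpha> K x y) = 0"
proof -
  have x': "0 \<le> x" "x \<le> 1" using a0 x by auto
  have fx: "set_integrable lborel {x..1} f"
    by (rule set_integrable_subset[OF fi]) (use x in auto)
  have gx: "set_integrable lborel {x..1} g"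
    by (rule set_integrable_subset[OF gi]) (use x in auto)
  have "(LINT t:{x..1}|lborel. (t - x) powr (\<alpha> - 1) * frac_op \<alpha> K f t)
      = (LINT t:{x..1}|lborel. (t - x) powr (\<alpha> - 1) * frac_op \<alpha> K g t)"
    unfolding set_lebesgue_integral_def
  proof (rule integral_cong_AE)
    show "(\<lambda>t. indicator {x..1} t *\<^sub>R ((t - x) powr (\<alpha> - 1) * frac_op \<alpha> K f t)) \<in> borel_measurable lborel"
      "(\<lambda>t. indicator {x..1} t *\<^sub>R ((t - x) powr (\<alpha> - 1) * frac_op \<alpha> K g t)) \<in> borel_measurable lborel"
      using borel_measurable_fractional_composition[OF \<alpha> LK x'(1) fx]
        borel_measurable_fractional_composition[OF \<alpha> LK x'(1) gx] by simp_all
    show "AE t in lborel. indicator {x..1} t *\<^sub>R ((t - x) powr (\<alpha> - 1) * frac_op \<alpha> K f t) =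
        indicator {x..1} t *\<^sub>R ((t - x) powr (\<alpha> - 1) * frac_op \<alpha> K g t)"
      using eq by (rule eventually_mono) (use x in \<open>auto simp: indicator_def\<close>)
  qed
  then have "(LINT y:{x..1}|lborel. f y * composite_kernel \<alpha> K x y)
      = (LINT y:{x..1}|lborel. g y * composite_kernel \<alpha> K x y)"
    using set_integral_fractional_composition[OF \<alpha> LK x'] fx gx by simp
  then show ?thesis
    unfolding left_diff_distrib
    using set_integral_diff(2)[OF set_integrable_mult_composite_kernel[OF x' fx]
        set_integrable_mult_composite_kernel[OF x' gx]] by simp
qed

lemma set_integral_mult_composite_kernel_diff:
  assumes uv: "0 \<le> u" "u \<le> v" "v \<le> 1" and hi: "set_integrable lborel {v..1} h"
  shows "set_integrable lborel {v..1} (\<lambda>y. h y * (composite_kernel \<alpha> K u y - composite_kernel \<alpha> K v y))"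
    and "\<bar>LINT y:{v..1}|lborel. h y * (composite_kernel \<alpha> K u y - composite_kernel \<alpha> K v y)\<bar>
      \<le> Beta \<alpha> (1 - \<alpha>) * (lip1 K * (v - u)) * (LINT y:{v..1}|lborel. \<bar>h y\<bar>)"
proof -
  have "continuous_on {v..1} (\<lambda>y. composite_kernel \<alpha> K u y - composite_kernel \<alpha> K v y)"
    using uv by (intro continuous_intros continuous_on_composite_kernel[OF \<alpha> LK]
        continuous_on_subset[OF continuous_on_composite_kernel[OF \<alpha> LK, of u]]) auto
  then have m: "(\<lambda>y. indicator {v..1} y *\<^sub>R (composite_kernel \<alpha> K u y - composite_kernel \<alpha> K v y))
      \<in> borel_measurable borel"
    by (rule borel_measurable_continuous_on_indicator[rotated]) simp
  have b: "AE y in lborel. y \<in> {v..1} \<longrightarrow>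
      \<bar>composite_kernel \<alpha> K u y - composite_kernel \<alpha> K v y\<bar> \<le> Beta \<alpha> (1 - \<alpha>) * (lip1 K * (v - u))"
    using composite_kernel_lipschitz[OF \<alpha> LK, of u _ v] uv by (intro AE_I2) auto
  have P: "0 \<le> Beta \<alpha> (1 - \<alpha>) * (lip1 K * (v - u))"
    using Beta_complement_pos[OF \<alpha>] lip1_nonneg[OF LK] uv by simp
  note bound = set_integral_mult_bounded[OF hi m b P]
  show "set_integrable lborel {v..1} (\<lambda>y. h y * (composite_kernel \<alpha> K u y - composite_kernel \<alpha> K v y))"
    by (rule bound(1))
  show "\<bar>LINT y:{v..1}|lborel. h y * (composite_kernel \<alpha> K u y - composite_kernel \<alpha> K v y)\<bar>
      \<le> Beta \<alpha> (1 - \<alpha>) * (lip1 K * (v - u)) * (LINT y:{v..1}|lborel. \<bar>h y\<bar>)"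
    by (rule bound(2))
qed

lemma set_integral_mult_composite_kernel_near_diag:
  assumes uv: "0 \<le> u" "u \<le> v" "v \<le> 1" and hi: "set_integrable lborel {u..<v} h"
  shows "set_integrable lborel {u..<v} (\<lambda>y. h y * (composite_kernel \<alpha> K u y - Beta \<alpha> (1 - \<alpha>) * K y y))"
    and "\<bar>LINT y:{u..<v}|lborel. h y * (composite_kernel \<alpha> K u y - Beta \<alpha> (1 - \<alpha>) * K y y)\<bar>
      \<le> Beta \<alpha> (1 - \<alpha>) * (lip1 K * (v - u)) * (LINT y:{u..<v}|lborel. \<bar>h y\<bar>)"
proof -
  define B where "B = Beta \<alpha> (1 - \<alpha>)"
  have B: "0 < B" unfolding B_def by (rule Beta_complement_pos[OF \<alpha>])
  have "continuous_on {u..<v} (\<lambda>y. composite_kernel \<alpha> K u y - B * K y y)"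
    using uv by (intro continuous_intros continuous_on_subset[OF continuous_on_composite_kernel[OF \<alpha> LK]]
        continuous_on_subset[OF Lip_Delta_continuous_on_diag[OF LK]]) auto
  then have m: "(\<lambda>y. indicator {u..<v} y *\<^sub>R (composite_kernel \<alpha> K u y - B * K y y)) \<in> borel_measurable borel"
    by (rule borel_measurable_continuous_on_indicator[rotated]) simp
  have b: "AE y in lborel. y \<in> {u..<v} \<longrightarrow> \<bar>composite_kernel \<alpha> K u y - B * K y y\<bar> \<le> B * (lip1 K * (v - u))"
  proof (intro AE_I2 impI)
    fix y assume y: "y \<in> {u..<v}"
    have "\<bar>composite_kernel \<alpha> K u y - B * K y y\<bar> \<le> B * (lip1 K * (y - u))"
      unfolding B_def by (rule composite_kernel_near_diag[OF \<alpha> LK]) (use y uv in auto)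
    also have "\<dots> \<le> B * (lip1 K * (v - u))"
      using y B lip1_nonneg[OF LK] by (intro mult_left_mono) auto
    finally show "\<bar>composite_kernel \<alpha> K u y - B * K y y\<bar> \<le> B * (lip1 K * (v - u))" .
  qed
  have P: "0 \<le> B * (lip1 K * (v - u))"
    using B lip1_nonneg[OF LK] uv by simp
  note bound = set_integral_mult_bounded[OF hi m b P, unfolded B_def]
  show "set_integrable lborel {u..<v} (\<lambda>y. h y * (composite_kernel \<alpha> K u y - Beta \<alpha> (1 - \<alpha>) * K y y))"
    by (rule bound(1))
  show "\<bar>LINT y:{u..<v}|lborel. h y * (composite_kernel \<alpha> K u y - Beta \<alpha> (1 - \<alpha>) * K y y)\<bar>
      \<le> Beta \<alpha> (1 - \<alpha>) * (lip1 K * (v - u)) * (LINT y:{u..<v}|lborel. \<bar>h y\<bar>)"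
    by (rule bound(2))
qed

text \<open>Splitting \<open>0 = \<integral>\<^sub>u\<^sup>1 h k(u, \<cdot>)\<close> at \<open>v\<close> and subtracting \<open>0 = \<integral>\<^sub>v\<^sup>1 h k(v, \<cdot>)\<close>
  leaves \<open>\<integral>\<^sub>u\<^sup>v h k(u, \<cdot>) = - \<integral>\<^sub>v\<^sup>1 h (k(u, \<cdot>) - k(v, \<cdot>))\<close>; the kernel \<open>k(u, y)\<close> is
  close to \<open>Beta \<alpha> (1 - \<alpha>) * K y y\<close> on \<open>[u, v)\<close>, and \<open>k(u, \<cdot>) - k(v, \<cdot>)\<close> is small.\<close>
lemma diag_increment_bound:
  assumes a0: "0 \<le> a0" and hi: "set_integrable lborel {a0..1} h"
    and Z: "\<And>x. a0 \<le> x \<Longrightarrow> x \<le> 1 \<Longrightarrow> (LINT y:{x..1}|lborel. h y * composite_kernel \<alpha> K x y) = 0"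
    and uv: "a0 \<le> u" "u < v" "v \<le> 1"
  shows "\<bar>LINT y:{u..<v}|lborel. h y * K y y\<bar> \<le> 2 * lip1 K * (v - u) * (LINT y:{a0..1}|lborel. \<bar>h y\<bar>)"
proof -
  define B where "B = Beta \<alpha> (1 - \<alpha>)"
  define k where "k = composite_kernel \<alpha> K"
  define N where "N = (LINT y:{a0..1}|lborel. \<bar>h y\<bar>)"
  define \<epsilon> where "\<epsilon> = B * (lip1 K * (v - u))"
  have B: "0 < B" unfolding B_def by (rule Beta_complement_pos[OF \<alpha>])
  have \<epsilon>: "0 \<le> \<epsilon>" using B lip1_nonneg[OF LK] uv by (simp add: \<epsilon>_def)
  have u: "0 \<le> u" "u \<le> v" "v \<le> 1" and v: "0 \<le> v" "v \<le> 1" using uv a0 by auto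
  have hu: "set_integrable lborel {u..1} h" and hv: "set_integrable lborel {v..1} h"
    and huv: "set_integrable lborel {u..<v} h"
    using uv by (auto intro: set_integrable_subset[OF hi])
  have iu: "set_integrable lborel {u..1} (\<lambda>y. h y * k u y)"
    unfolding k_def using u hu by (intro set_integrable_mult_composite_kernel) auto
  have iv: "set_integrable lborel {v..1} (\<lambda>y. h y * k v y)"
    unfolding k_def by (rule set_integrable_mult_composite_kernel[OF v hv])
  have iuv: "set_integrable lborel {u..<v} (\<lambda>y. h y * k u y)"
    and iu_v: "set_integrable lborel {v..1} (\<lambda>y. h y * k u y)"
    using uv by (auto intro: set_integrable_subset[OF iu])
  note tail = set_integral_mult_composite_kernel_diff[OF u hv, folded k_def B_def, folded \<epsilon>_def]
  note diag = set_integral_mult_composite_kernel_near_diag[OF u huv, folded k_def B_def, folded \<epsilon>_def]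
  have "(LINT y:{u..<v}|lborel. h y * k u y) + (LINT y:{v..1}|lborel. h y * k u y) = 0"
  proof -
    have "{u..<v} \<union> {v..1} = {u..1::real}" "{u..<v} \<inter> {v..1} = ({}::real set)" using uv by auto
    then show ?thesis using set_integral_Un[OF _ iuv iu_v] Z[of u] uv by (simp add: k_def)
  qed
  moreover have "(LINT y:{v..1}|lborel. h y * (k u y - k v y))
      = (LINT y:{v..1}|lborel. h y * k u y) - (LINT y:{v..1}|lborel. h y * k v y)"
    using set_integral_diff(2)[OF iu_v iv] by (simp add: right_diff_distrib)
  moreover have "(LINT y:{v..1}|lborel. h y * k v y) = 0"
    using Z[of v] uv by (simp add: k_def)
  moreover have "(LINT y:{u..<v}|lborel. h y * k u y) - (LINT y:{u..<v}|lborel. h y * (k u y - B * K y y))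
      = B * (LINT y:{u..<v}|lborel. h y * K y y)"
  proof -
    have "(LINT y:{u..<v}|lborel. h y * k u y) - (LINT y:{u..<v}|lborel. h y * (k u y - B * K y y))
        = (LINT y:{u..<v}|lborel. h y * k u y - h y * (k u y - B * K y y))"
      by (rule set_integral_diff(2)[OF iuv diag(1), symmetric])
    also have "\<dots> = (LINT y:{u..<v}|lborel. B * (h y * K y y))"
      by (simp add: algebra_simps)
    finally show ?thesis by simp
  qed
  ultimately have split: "B * (LINT y:{u..<v}|lborel. h y * K y y)
      = - (LINT y:{v..1}|lborel. h y * (k u y - k v y)) - (LINT y:{u..<v}|lborel. h y * (k u y - B * K y y))"
    by linarith
  have "(LINT y:{v..1}|lborel. \<bar>h y\<bar>) \<le> N" "(LINT y:{u..<v}|lborel. \<bar>h y\<bar>) \<le> N"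
    unfolding N_def using uv by (auto intro!: set_integral_abs_mono_set[OF hi])
  then have bounds: "\<bar>LINT y:{v..1}|lborel. h y * (k u y - k v y)\<bar> \<le> \<epsilon> * N"
    "\<bar>LINT y:{u..<v}|lborel. h y * (k u y - B * K y y)\<bar> \<le> \<epsilon> * N"
    using tail(2) diag(2) mult_left_mono[OF _ \<epsilon>] by (meson order_trans)+
  have "B * \<bar>LINT y:{u..<v}|lborel. h y * K y y\<bar> \<le> 2 * \<epsilon> * N"
    using split bounds B by (simp add: abs_mult)
  then show ?thesis
    using B by (simp add: \<epsilon>_def N_def mult_ac)
qed

end

lemma sum_indicator_partition:
  fixes a0 d :: real and n :: nat and \<psi> :: "real \<Rightarrow> real"
  assumes d: "d > 0" and y: "a0 \<le> y" "y < a0 + real n * d"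
  defines "k \<equiv> nat \<lfloor>(y - a0) / d\<rfloor>"
  shows "k < n" "a0 + real k * d \<le> y" "y < a0 + real (Suc k) * d"
    and "(\<Sum>i<n. \<psi> (a0 + real i * d) * indicator {a0 + real i * d..<a0 + real (Suc i) * d} y) = \<psi> (a0 + real k * d)"
proof -
  define t where "t = (y - a0) / d"
  have t0: "t \<ge> 0" using y d by (simp add: t_def)
  have tn: "t < real n" using y d by (simp add: t_def pos_divide_less_eq mult.commute)
  have kf: "real k = of_int \<lfloor>t\<rfloor>" using t0 by (simp add: k_def t_def)
  have kt: "real k \<le> t" "t < real k + 1" using kf by linarith+
  have iff: "a0 + real i * d \<le> y \<and> y < a0 + real (Suc i) * d \<longleftrightarrow> i = k" for i
  proof -
    have "a0 + real i * d \<le> y \<longleftrightarrow> real i \<le> t" using d by (simp add: t_def pos_le_divide_eq) arith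
    moreover have "y < a0 + real (Suc i) * d \<longleftrightarrow> t < real i + 1"
      using d by (simp add: t_def pos_divide_less_eq algebra_simps)
    moreover have "real i \<le> t \<and> t < real i + 1 \<longleftrightarrow> i = k"
    proof
      assume "real i \<le> t \<and> t < real i + 1"
      then have "\<lfloor>t\<rfloor> = int i" by (simp add: floor_eq_iff)
      then show "i = k" by (simp add: k_def t_def)
    next
      assume "i = k" then show "real i \<le> t \<and> t < real i + 1" using kt by simp
    qed
    ultimately show ?thesis by blast
  qed
  show "k < n" using kt tn by linarith
  show "a0 + real k * d \<le> y" "y < a0 + real (Suc k) * d" using iff[of k] by auto
  have "(\<Sum>i<n. \<psi> (a0 + real i * d) * indicator {a0 + real i * d..<a0 + real (Suc i) * d} y)
      = (\<Sum>i<n. if i = k then \<psi> (a0 + real k * d) else 0)"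
    by (rule sum.cong[OF refl]) (use iff in \<open>auto simp: indicator_def\<close>)
  also have "\<dots> = \<psi> (a0 + real k * d)" using \<open>k < n\<close> by simp
  finally show "(\<Sum>i<n. \<psi> (a0 + real i * d) * indicator {a0 + real i * d..<a0 + real (Suc i) * d} y) = \<psi> (a0 + real k * d)" .
qed
lemma uniform_step_approximation:
  fixes \<psi> :: "real \<Rightarrow> real"
  assumes a0: "a0 < 1" and c: "continuous_on {a0..1} \<psi>" and \<epsilon>: "0 < \<epsilon>"
  obtains n :: nat and d :: real where "0 < d" "a0 + real n * d = 1"
    "\<And>y. a0 \<le> y \<Longrightarrow> y < 1 \<Longrightarrow>
       \<bar>\<psi> y - (\<Sum>i<n. \<psi> (a0 + real i * d) * indicator {a0 + real i * d..<a0 + real (Suc i) * d} y)\<bar> \<le> \<epsilon>"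
proof -
  obtain \<delta> where \<delta>: "0 < \<delta>"
    and uc: "\<And>x x'. x \<in> {a0..1} \<Longrightarrow> x' \<in> {a0..1} \<Longrightarrow> dist x' x < \<delta> \<Longrightarrow> dist (\<psi> x') (\<psi> x) < \<epsilon>"
    using compact_uniformly_continuous[OF c compact_Icc] \<epsilon> unfolding uniformly_continuous_on_def by metis
  obtain n :: nat where n: "(1 - a0) / \<delta> < real n"
    using reals_Archimedean2 by blast
  have npos: "0 < n" using n a0 \<delta> by (cases n) (auto simp: divide_pos_pos less_le_not_le)
  define d where "d = (1 - a0) / real n"
  have d: "0 < d" using a0 npos by (simp add: d_def)
  have "d < \<delta>"
    using n \<delta> npos a0 by (simp add: d_def divide_less_eq mult.commute pos_divide_less_eq)
  have last: "a0 + real n * d = 1" using npos by (simp add: d_def)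
  show thesis
  proof (rule that[OF d last])
    fix y assume y: "a0 \<le> y" "y < 1"
    define k where "k = nat \<lfloor>(y - a0) / d\<rfloor>"
    have y': "a0 \<le> y" "y < a0 + real n * d" using y last by auto
    note part = sum_indicator_partition(1-3)[OF d y', folded k_def]
      sum_indicator_partition(4)[OF d y', where \<psi>=\<psi>, folded k_def]
    have "dist y (a0 + real k * d) < \<delta>"
      using part(2,3) \<open>d < \<delta>\<close> by (simp add: dist_real_def algebra_simps)
    moreover have "a0 + real k * d \<in> {a0..1}"
      using part(2) y d by simp
    ultimately have "dist (\<psi> y) (\<psi> (a0 + real k * d)) < \<epsilon>"
      using uc y by simp
    then have "\<bar>\<psi> y - \<psi> (a0 + real k * d)\<bar> \<le> \<epsilon>"
      by (simp add: dist_real_def)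
    then show "\<bar>\<psi> y - (\<Sum>i<n. \<psi> (a0 + real i * d) * indicator {a0 + real i * d..<a0 + real (Suc i) * d} y)\<bar> \<le> \<epsilon>"
      by (simp only: part(4))
  qed
qed

lemma set_integral_mult_step_le:
  fixes G :: "real \<Rightarrow> real" and c :: "nat \<Rightarrow> real"
  assumes d: "0 < d" and last: "a0 + real n * d = 1" and Gi: "set_integrable lborel {a0..1} G"
    and IB: "\<And>u v. a0 \<le> u \<Longrightarrow> u < v \<Longrightarrow> v \<le> 1 \<Longrightarrow> \<bar>LINT y:{u..<v}|lborel. G y\<bar> \<le> C * (v - u)"
    and c: "\<And>i. i < n \<Longrightarrow> \<bar>c i\<bar> \<le> P"
  defines "\<sigma> \<equiv> \<lambda>y. \<Sum>i<n. c i * indicator {a0 + real i * d..<a0 + real (Suc i) * d} y"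
  shows "set_integrable lborel {a0..1} (\<lambda>y. G y * \<sigma> y)"
    and "\<bar>LINT y:{a0..1}|lborel. G y * \<sigma> y\<bar> \<le> C * (1 - a0) * P"
proof -
  define p where "p i = a0 + real i * d" for i
  have bounds: "a0 \<le> p i" "p (Suc i) \<le> 1" if "i < n" for i
  proof -
    have "p (Suc i) \<le> p n" "a0 \<le> p i" using that d by (simp_all add: p_def)
    then show "a0 \<le> p i" "p (Suc i) \<le> 1" using last by (simp_all add: p_def)
  qed
  have sub: "{p i..<p (Suc i)} \<subseteq> {a0..1}" if "i < n" for i
    using bounds[OF that] by auto
  have Gi_sub: "set_integrable lborel {p i..<p (Suc i)} G" if "i < n" for i
    by (rule set_integrable_subset[OF Gi _ sub[OF that]]) simp
  have piece: "indicator {a0..1} y *\<^sub>R (G y * (c i * indicator {p i..<p (Suc i)} y))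
      = c i * (indicator {p i..<p (Suc i)} y *\<^sub>R G y)" if "i < n" for i y
    using sub[OF that] by (auto simp: indicator_def)
  have sum: "indicator {a0..1} y *\<^sub>R (G y * \<sigma> y)
      = (\<Sum>i<n. c i * (indicator {p i..<p (Suc i)} y *\<^sub>R G y))" for y
  proof -
    have "indicator {a0..1} y *\<^sub>R (G y * \<sigma> y)
        = (\<Sum>i<n. indicator {a0..1} y *\<^sub>R (G y * (c i * indicator {p i..<p (Suc i)} y)))"
      by (simp only: \<sigma>_def p_def sum_distrib_left scaleR_sum_right)
    also have "\<dots> = (\<Sum>i<n. c i * (indicator {p i..<p (Suc i)} y *\<^sub>R G y))"
      by (rule sum.cong[OF refl], rule piece) simp
    finally show ?thesis .
  qed
  have int: "integrable lborel (\<lambda>y. c i * (indicator {p i..<p (Suc i)} y *\<^sub>R G y))" if "i < n" for i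
    using Gi_sub[OF that] unfolding set_integrable_def by (rule integrable_mult_right)
  show "set_integrable lborel {a0..1} (\<lambda>y. G y * \<sigma> y)"
    unfolding set_integrable_def sum using int by (intro Bochner_Integration.integrable_sum) simp
  have "(LINT y:{a0..1}|lborel. G y * \<sigma> y) = (\<Sum>i<n. c i * (LINT y:{p i..<p (Suc i)}|lborel. G y))"
    unfolding set_lebesgue_integral_def sum using int by (subst Bochner_Integration.integral_sum) simp_all
  also have "\<bar>\<dots>\<bar> \<le> (\<Sum>i<n. P * (C * d))"
  proof (rule order_trans[OF sum_abs sum_mono])
    fix i assume "i \<in> {..<n}"
    then have i: "i < n" by simp
    have "\<bar>LINT y:{p i..<p (Suc i)}|lborel. G y\<bar> \<le> C * (p (Suc i) - p i)"
      by (rule IB) (use bounds[OF i] d in \<open>auto simp: p_def\<close>)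
    also have "p (Suc i) - p i = d" by (simp add: p_def algebra_simps)
    finally have "\<bar>c i\<bar> * \<bar>LINT y:{p i..<p (Suc i)}|lborel. G y\<bar> \<le> P * (C * d)"
      using c[OF i] by (intro mult_mono) (auto intro: order_trans[OF abs_ge_zero])
    then show "\<bar>c i * (LINT y:{p i..<p (Suc i)}|lborel. G y)\<bar> \<le> P * (C * d)"
      by (simp add: abs_mult)
  qed
  also have "\<dots> = C * (1 - a0) * P"
  proof -
    have "real n * d = 1 - a0" using last by simp
    then show ?thesis by (simp add: mult_ac)
  qed
  finally show "\<bar>LINT y:{a0..1}|lborel. G y * \<sigma> y\<bar> \<le> C * (1 - a0) * P" .
qed

text \<open>Riemann sums: approximate \<open>\<psi>\<close> uniformly within \<open>\<epsilon>\<close> by a step function on a uniform partition.\<close>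
lemma set_integral_mult_continuous_le_plus:
  fixes G \<psi> :: "real \<Rightarrow> real"
  assumes a0: "a0 < 1" and Gi: "set_integrable lborel {a0..1} G"
    and IB: "\<And>u v. a0 \<le> u \<Longrightarrow> u < v \<Longrightarrow> v \<le> 1 \<Longrightarrow> \<bar>LINT y:{u..<v}|lborel. G y\<bar> \<le> C * (v - u)"
    and c\<psi>: "continuous_on {a0..1} \<psi>" and b\<psi>: "\<forall>y\<in>{a0..1}. \<bar>\<psi> y\<bar> \<le> P" and \<epsilon>: "0 < \<epsilon>"
  shows "\<bar>LINT y:{a0..1}|lborel. G y * \<psi> y\<bar> \<le> C * (1 - a0) * P + \<epsilon> * (LINT y:{a0..1}|lborel. \<bar>G y\<bar>)"
proof -
  define J where "J = {a0..1::real}"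
  obtain n d where d: "0 < d" and last: "a0 + real n * d = 1" and approx:
    "\<And>y. a0 \<le> y \<Longrightarrow> y < 1 \<Longrightarrow>
       \<bar>\<psi> y - (\<Sum>i<n. \<psi> (a0 + real i * d) * indicator {a0 + real i * d..<a0 + real (Suc i) * d} y)\<bar> \<le> \<epsilon>"
    using uniform_step_approximation[OF a0 c\<psi> \<epsilon>] by blast
  define \<sigma> where "\<sigma> y = (\<Sum>i<n. \<psi> (a0 + real i * d) * indicator {a0 + real i * d..<a0 + real (Suc i) * d} y)" for y
  have c: "\<bar>\<psi> (a0 + real i * d)\<bar> \<le> P" if "i < n" for i
  proof -
    have "0 \<le> real i * d" "real i * d \<le> real n * d" using that d by simp_all
    then have "a0 \<le> a0 + real i * d \<and> a0 + real i * d \<le> 1" using last by linarith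
    with b\<psi> show ?thesis by simp
  qed
  have step: "set_integrable lborel J (\<lambda>y. G y * \<sigma> y)"
    unfolding \<sigma>_def J_def by (rule set_integral_mult_step_le(1)[OF d last Gi IB c])
  have step_le: "\<bar>LINT y:J|lborel. G y * \<sigma> y\<bar> \<le> C * (1 - a0) * P"
    unfolding \<sigma>_def J_def by (rule set_integral_mult_step_le(2)[OF d last Gi IB c])
  have "(\<lambda>y. indicator J y *\<^sub>R \<psi> y) \<in> borel_measurable borel"
    unfolding J_def by (rule borel_measurable_continuous_on_indicator[OF _ c\<psi>]) simp
  moreover have "\<sigma> \<in> borel_measurable borel"
    unfolding \<sigma>_def by measurable
  ultimately have m: "(\<lambda>y. indicator J y *\<^sub>R (\<psi> y - \<sigma> y)) \<in> borel_measurable borel"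
    by (simp add: indicator_scaleR_eq_if right_diff_distrib borel_measurable_diff
        borel_measurable_times borel_measurable_indicator J_def)
  have "\<bar>\<psi> y - \<sigma> y\<bar> \<le> \<epsilon>" if "y \<in> J" "y \<noteq> 1" for y
    unfolding \<sigma>_def using that by (intro approx) (auto simp: J_def)
  then have b: "AE y in lborel. y \<in> J \<longrightarrow> \<bar>\<psi> y - \<sigma> y\<bar> \<le> \<epsilon>"
    using AE_lborel_singleton[of 1] by (auto elim!: eventually_mono)
  note rest = set_integral_mult_bounded[OF Gi[folded J_def] m b less_imp_le[OF \<epsilon>]]
  have "(LINT y:J|lborel. G y * \<psi> y) = (LINT y:J|lborel. G y * \<sigma> y) + (LINT y:J|lborel. G y * (\<psi> y - \<sigma> y))"
    using set_integral_add(2)[OF step rest(1)] by (simp add: algebra_simps)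
  then show ?thesis
    using step_le rest(2) by (simp add: J_def)
qed

lemma set_integral_mult_continuous_le:
  fixes G \<psi> :: "real \<Rightarrow> real"
  assumes a0: "a0 < 1" and Gi: "set_integrable lborel {a0..1} G"
    and IB: "\<And>u v. a0 \<le> u \<Longrightarrow> u < v \<Longrightarrow> v \<le> 1 \<Longrightarrow> \<bar>LINT y:{u..<v}|lborel. G y\<bar> \<le> C * (v - u)"
    and c\<psi>: "continuous_on {a0..1} \<psi>" and b\<psi>: "\<forall>y\<in>{a0..1}. \<bar>\<psi> y\<bar> \<le> P"
  shows "\<bar>LINT y:{a0..1}|lborel. G y * \<psi> y\<bar> \<le> C * (1 - a0) * P"
proof (rule field_le_epsilon)
  define NG where "NG = (LINT y:{a0..1}|lborel. \<bar>G y\<bar>)"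
  have NG: "0 \<le> NG"
    unfolding NG_def set_lebesgue_integral_def by (rule Bochner_Integration.integral_nonneg) simp
  fix e :: real assume e: "0 < e"
  have "0 < e / (NG + 1)" using e NG by simp
  from set_integral_mult_continuous_le_plus[OF a0 Gi IB c\<psi> b\<psi> this[unfolded NG_def]]
  have "\<bar>LINT y:{a0..1}|lborel. G y * \<psi> y\<bar> \<le> C * (1 - a0) * P + e / (NG + 1) * NG"
    unfolding NG_def .
  also have "e / (NG + 1) * NG \<le> e"
    using e NG by (simp add: divide_le_eq field_simps)
  finally show "\<bar>LINT y:{a0..1}|lborel. G y * \<psi> y\<bar> \<le> C * (1 - a0) * P + e"
    by simp
qed

lemma continuous_approximation_AE:
  fixes u :: "real \<Rightarrow> real"
  assumes u: "u \<in> borel_measurable borel" and b: "\<And>y. \<bar>u y\<bar> \<le> 1"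
  obtains \<phi> :: "nat \<Rightarrow> real \<Rightarrow> real"
  where "\<And>n. continuous_on UNIV (\<phi> n)" "\<And>n y. \<bar>\<phi> n y\<bar> \<le> 1" "AE y in lborel. (\<lambda>n. \<phi> n y) \<longlonglongrightarrow> u y"
proof -
  have "u \<in> borel_measurable lebesgue"
    by (rule measurable_completion) (use u in simp)
  then have "u measurable_on UNIV"
    by (rule lebesgue_measurable_imp_measurable_on_real) simp
  then obtain N g where N: "negligible N" and gc: "\<And>n. continuous_on UNIV (g n)"
      and gl: "\<And>x. x \<notin> N \<Longrightarrow> (\<lambda>n. g n x) \<longlonglongrightarrow> u x"
    unfolding measurable_on_def by auto
  show thesis
  proof (rule that[of "\<lambda>n y. max (-1) (min 1 (g n y))"])
    show "continuous_on UNIV (\<lambda>y. max (-1) (min 1 (g n y)))" for n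
      by (intro continuous_intros gc)
    show "\<bar>max (-1) (min 1 (g n y))\<bar> \<le> 1" for n y
      by simp
    have "N \<in> null_sets lebesgue" using N by (simp add: negligible_iff_null_sets)
    then have "AE x in lborel. x \<notin> N"
      using AE_not_in AE_completion_iff by blast
    then show "AE x in lborel. (\<lambda>n. max (-1) (min 1 (g n x))) \<longlonglongrightarrow> u x"
    proof (rule eventually_mono)
      fix x assume "x \<notin> N"
      then have "(\<lambda>n. max (-1) (min 1 (g n x))) \<longlonglongrightarrow> max (-1) (min 1 (u x))"
        by (intro tendsto_max tendsto_min tendsto_const gl)
      moreover have "max (-1) (min 1 (u x)) = u x" using b[of x] by (simp add: abs_le_iff)
      ultimately show "(\<lambda>n. max (-1) (min 1 (g n x))) \<longlonglongrightarrow> u x" by simp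
    qed
  qed
qed

text \<open>Duality: test against continuous approximations of \<open>sgn h\<close> and pass to the limit.\<close>
lemma set_integral_abs_le_continuous_tests:
  fixes h :: "real \<Rightarrow> real"
  assumes hi: "set_integrable lborel J h"
    and T: "\<And>\<phi>. continuous_on UNIV \<phi> \<Longrightarrow> (\<forall>y. \<bar>\<phi> y\<bar> \<le> 1) \<Longrightarrow> \<bar>LINT y:J|lborel. h y * \<phi> y\<bar> \<le> Q"
  shows "(LINT y:J|lborel. \<bar>h y\<bar>) \<le> Q"
proof -
  let ?h = "\<lambda>y. indicator J y *\<^sub>R h y"
  have hint: "integrable lborel ?h" using hi unfolding set_integrable_def .
  have mh: "?h \<in> borel_measurable borel"
    using borel_measurable_integrable[OF hint] by simp
  define u where "u y = sgn (?h y)" for y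
  have mu: "u \<in> borel_measurable borel"
    unfolding u_def using measurable_compose[OF mh borel_measurable_sgn] by (simp add: o_def)
  have "\<bar>u y\<bar> \<le> 1" for y
    by (simp add: u_def abs_sgn_eq)
  then obtain \<phi> where \<phi>c: "\<And>n. continuous_on UNIV (\<phi> n)" and \<phi>b: "\<And>n y. \<bar>\<phi> n y\<bar> \<le> 1"
    and \<phi>l: "AE y in lborel. (\<lambda>n. \<phi> n y) \<longlonglongrightarrow> u y"
    using continuous_approximation_AE[OF mu] by blast
  have lim: "(\<lambda>n. \<integral>y. ?h y * \<phi> n y \<partial>lborel) \<longlonglongrightarrow> (\<integral>y. ?h y * u y \<partial>lborel)"
  proof (rule integral_dominated_convergence[OF _ _ integrable_norm[OF hint]])
    show "(\<lambda>y. ?h y * u y) \<in> borel_measurable lborel"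
      unfolding measurable_lborel2 by (intro borel_measurable_times mh mu)
    show "(\<lambda>y. ?h y * \<phi> n y) \<in> borel_measurable lborel" for n
      unfolding measurable_lborel2 by (intro borel_measurable_times mh borel_measurable_continuous_onI \<phi>c)
    show "AE y in lborel. (\<lambda>n. ?h y * \<phi> n y) \<longlonglongrightarrow> ?h y * u y"
      using \<phi>l by (rule eventually_mono) (intro tendsto_mult tendsto_const)
    show "AE y in lborel. norm (?h y * \<phi> n y) \<le> norm (?h y)" for n
      using \<phi>b[of n] by (intro AE_I2) (simp add: abs_mult mult_left_le)
  qed
  have le: "(\<integral>y. ?h y * \<phi> n y \<partial>lborel) \<le> Q" for n
  proof -
    have "(\<integral>y. ?h y * \<phi> n y \<partial>lborel) = (LINT y:J|lborel. h y * \<phi> n y)"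
      unfolding set_lebesgue_integral_def by (simp add: mult.assoc)
    also have "\<dots> \<le> \<bar>LINT y:J|lborel. h y * \<phi> n y\<bar>" by simp
    also have "\<dots> \<le> Q" by (rule T[OF \<phi>c]) (simp add: \<phi>b)
    finally show ?thesis .
  qed
  have "(\<integral>y. ?h y * u y \<partial>lborel) \<le> Q"
    by (rule LIMSEQ_le_const2[OF lim]) (use le in auto)
  moreover have "(\<lambda>y. ?h y * u y) = (\<lambda>y. indicator J y *\<^sub>R \<bar>h y\<bar>)"
  proof
    fix y show "?h y * u y = indicator J y *\<^sub>R \<bar>h y\<bar>"
      by (cases "y \<in> J") (auto simp: u_def sgn_real_def)
  qed
  ultimately show ?thesis
    unfolding set_lebesgue_integral_def by simp
qed

context
  fixes \<alpha> :: real and K :: "real \<Rightarrow> real \<Rightarrow> real"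
  assumes \<alpha>: "0 < \<alpha>" "\<alpha> < 1" and LK: "Lip_Delta K"
begin

text \<open>Testing \<open>h\<close> against \<open>\<phi>\<close> means testing \<open>h y * K y y\<close>
  against \<open>\<phi> y / K y y\<close>, and the primitive of \<open>h y * K y y\<close> is \<open>2 lip1 K \<parallel>h\<parallel>\<close>-Lipschitz.\<close>
lemma diag_inf_mult_L1_le:
  assumes a0: "0 \<le> a0" "a0 < 1" and nz: "\<forall>x\<in>{0..1}. K x x \<noteq> 0"
    and hi: "set_integrable lborel {a0..1} h"
    and Z: "\<And>x. a0 \<le> x \<Longrightarrow> x \<le> 1 \<Longrightarrow> (LINT y:{x..1}|lborel. h y * composite_kernel \<alpha> K x y) = 0"
  shows "diag_inf K * (LINT y:{a0..1}|lborel. \<bar>h y\<bar>) \<le> 2 * lip1 K * (1 - a0) * (LINT y:{a0..1}|lborel. \<bar>h y\<bar>)"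
proof -
  define m where "m = diag_inf K"
  define C where "C = 2 * lip1 K * (LINT y:{a0..1}|lborel. \<bar>h y\<bar>)"
  have m: "0 < m" unfolding m_def by (rule diag_inf_pos[OF LK nz])
  have Kdiag: "continuous_on {a0..1} (\<lambda>y. K y y)"
    using a0 by (intro continuous_on_subset[OF Lip_Delta_continuous_on_diag[OF LK]]) auto
  have Gi: "set_integrable lborel {a0..1} (\<lambda>y. h y * K y y)"
  proof (rule set_integral_mult_bounded(1)[OF hi _ _ sup_abs_nonneg[OF LK]])
    show "(\<lambda>y. indicator {a0..1} y *\<^sub>R K y y) \<in> borel_measurable borel"
      by (rule borel_measurable_continuous_on_indicator[OF _ Kdiag]) simp
    show "AE y in lborel. y \<in> {a0..1} \<longrightarrow> \<bar>K y y\<bar> \<le> sup_abs K"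
      using a0 by (intro AE_I2 impI abs_le_sup_abs[OF LK]) auto
  qed
  have IB: "\<bar>LINT y:{u..<v}|lborel. h y * K y y\<bar> \<le> C * (v - u)" if "a0 \<le> u" "u < v" "v \<le> 1" for u v
    using diag_increment_bound[OF \<alpha> LK a0(1) hi Z that] by (simp only: C_def mult_ac)
  have "\<bar>LINT y:{a0..1}|lborel. h y * \<phi> y\<bar> \<le> C * (1 - a0) * (1 / m)"
    if \<phi>c: "continuous_on UNIV \<phi>" and \<phi>b: "\<forall>y. \<bar>\<phi> y\<bar> \<le> 1" for \<phi>
  proof -
    have Kne: "K y y \<noteq> 0" if "y \<in> {a0..1}" for y using nz that a0 by auto
    have "continuous_on {a0..1} (\<lambda>y. \<phi> y / K y y)"
      using Kne by (intro continuous_intros continuous_on_subset[OF \<phi>c] Kdiag) auto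
    moreover have "\<forall>y\<in>{a0..1}. \<bar>\<phi> y / K y y\<bar> \<le> 1 / m"
    proof
      fix y assume y: "y \<in> {a0..1}"
      have "m \<le> \<bar>K y y\<bar>" unfolding m_def by (rule diag_inf_le) (use y a0 in auto)
      then show "\<bar>\<phi> y / K y y\<bar> \<le> 1 / m"
        using \<phi>b m by (simp add: abs_divide frac_le)
    qed
    ultimately have "\<bar>LINT y:{a0..1}|lborel. h y * K y y * (\<phi> y / K y y)\<bar> \<le> C * (1 - a0) * (1 / m)"
      using set_integral_mult_continuous_le[OF a0(2) Gi IB, of "\<lambda>y. \<phi> y / K y y" "1 / m"] by simp
    moreover have "(LINT y:{a0..1}|lborel. h y * K y y * (\<phi> y / K y y)) = (LINT y:{a0..1}|lborel. h y * \<phi> y)"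
      unfolding set_lebesgue_integral_def
      by (rule Bochner_Integration.integral_cong) (auto simp: indicator_def Kne)
    ultimately show ?thesis by simp
  qed
  then have "(LINT y:{a0..1}|lborel. \<bar>h y\<bar>) \<le> C * (1 - a0) * (1 / m)"
    by (rule set_integral_abs_le_continuous_tests[OF hi])
  then show ?thesis
    using m by (simp add: m_def C_def field_simps)
qed

end

lemma inj_L1_if_lip1_small:
  assumes \<alpha>: "0 < \<alpha>" "\<alpha> < 1" and LK: "Lip_Delta K" and nz: "\<forall>x\<in>{0..1}. K x x \<noteq> 0"
    and a0: "0 \<le> a0" "a0 < 1" and small: "2 * lip1 K * (1 - a0) < diag_inf K"
  shows "inj_L1 \<alpha> K a0"
  unfolding inj_L1_def
proof (intro allI impI)
  fix f g :: "real \<Rightarrow> real"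
  assume fi: "set_integrable lborel {a0..1} f" and gi: "set_integrable lborel {a0..1} g"
    and eq: "AE x in lborel. x \<in> {a0..1} \<longrightarrow> frac_op \<alpha> K f x = frac_op \<alpha> K g x"
  define N where "N = (LINT y:{a0..1}|lborel. \<bar>f y - g y\<bar>)"
  have hi: "set_integrable lborel {a0..1} (\<lambda>y. f y - g y)"
    by (rule set_integral_diff(1)[OF fi gi])
  have "diag_inf K * N \<le> 2 * lip1 K * (1 - a0) * N"
    unfolding N_def
    by (rule diag_inf_mult_L1_le[OF \<alpha> LK a0 nz hi set_integral_composite_kernel_eq_0[OF \<alpha> LK a0(1) fi gi eq]])
  moreover have "0 \<le> N"
    unfolding N_def set_lebesgue_integral_def by (rule Bochner_Integration.integral_nonneg) simp
  ultimately have "N = 0"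
  proof (rule_tac ccontr)
    assume le: "diag_inf K * N \<le> 2 * lip1 K * (1 - a0) * N" and "0 \<le> N" and "N \<noteq> 0"
    then have "2 * lip1 K * (1 - a0) * N < diag_inf K * N"
      using small by (intro mult_strict_right_mono) auto
    with le show False by simp
  qed
  moreover have "integrable lborel (\<lambda>y. indicator {a0..1} y *\<^sub>R \<bar>f y - g y\<bar>)"
    using set_integrable_norm[OF hi] unfolding set_integrable_def by simp
  ultimately have "AE y in lborel. indicator {a0..1} y *\<^sub>R \<bar>f y - g y\<bar> = 0"
    unfolding N_def set_lebesgue_integral_def by (subst integral_nonneg_eq_0_iff_AE[symmetric]) auto
  then show "AE x in lborel. x \<in> {a0..1} \<longrightarrow> f x = g x"
    by (rule eventually_mono) (auto simp: indicator_def split: if_splits)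
qed

lemma lip1_margin:
  fixes m L \<eta> :: real
  assumes m: "0 < m" and L: "0 \<le> L" and \<eta>: "1 - m / (4 * L + m) \<le> \<eta>"
  shows "2 * L * (1 - \<eta>) < m"
proof -
  have den: "0 < 4 * L + m" using m L by simp
  have "2 * L * (1 - \<eta>) \<le> 2 * L * (m / (4 * L + m))"
    using \<eta> L by (intro mult_left_mono) auto
  also have "\<dots> < m"
  proof -
    have "0 < m * m + 2 * (L * m)" using m L by (simp add: add_pos_nonneg)
    then have "2 * L * m < m * (4 * L + m)" by (simp add: algebra_simps)
    then show ?thesis using den by (simp add: pos_divide_less_eq)
  qed
  finally show ?thesis .
qed

lemma inj_L1_near_one:
  assumes \<alpha>: "0 < \<alpha>" "\<alpha> < 1" and LK: "Lip_Delta K" and nz: "\<forall>x\<in>{0..1}. K x x \<noteq> 0"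
    and \<eta>: "1 - diag_inf K / (4 * lip1 K + diag_inf K) \<le> \<eta>" "\<eta> < 1"
  shows "inj_L1 \<alpha> K \<eta>"
proof (rule inj_L1_if_lip1_small[OF \<alpha> LK nz _ \<eta>(2)])
  have m: "0 < diag_inf K" by (rule diag_inf_pos[OF LK nz])
  have L: "0 \<le> lip1 K" by (rule lip1_nonneg[OF LK])
  show "2 * lip1 K * (1 - \<eta>) < diag_inf K"
    by (rule lip1_margin[OF m L \<eta>(1)])
  have "diag_inf K / (4 * lip1 K + diag_inf K) \<le> 1"
    using m L by simp
  then show "0 \<le> \<eta>"
    using \<eta>(1) by linarith
qed

theorem lemma2p8:
  fixes \<alpha> :: real
  assumes "0 < \<alpha>" and "\<alpha> < 1"
  shows "\<forall>m M L. \<exists>\<eta>. 0 \<le> \<eta> \<and> \<eta> < 1 \<and>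
           (\<forall>K. Lip_Delta K \<and> (\<forall>x\<in>{0..1}. K x x \<noteq> 0) \<and>
                diag_inf K = m \<and> sup_abs K = M \<and> lip1 K = L \<longrightarrow>
                (\<forall>\<eta>'. \<eta> \<le> \<eta>' \<and> \<eta>' < 1 \<longrightarrow> inj_L1 \<alpha> K \<eta>'))"
proof (intro allI)
  fix m M L :: real
  show "\<exists>\<eta>. 0 \<le> \<eta> \<and> \<eta> < 1 \<and>
           (\<forall>K. Lip_Delta K \<and> (\<forall>x\<in>{0..1}. K x x \<noteq> 0) \<and>
                diag_inf K = m \<and> sup_abs K = M \<and> lip1 K = L \<longrightarrow>
                (\<forall>\<eta>'. \<eta> \<le> \<eta>' \<and> \<eta>' < 1 \<longrightarrow> inj_L1 \<alpha> K \<eta>'))"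
  proof (cases "0 < m")
    case True
    define \<eta> where "\<eta> = 1 - m / (4 * \<bar>L\<bar> + m)"
    have "0 \<le> \<eta>" "\<eta> < 1"
      using True by (simp_all add: \<eta>_def add_nonneg_pos)
    moreover have "inj_L1 \<alpha> K \<eta>'"
      if K: "Lip_Delta K" "\<forall>x\<in>{0..1}. K x x \<noteq> 0" "diag_inf K = m" "lip1 K = L"
        and \<eta>': "\<eta> \<le> \<eta>'" "\<eta>' < 1" for K \<eta>'
      using inj_L1_near_one[OF assms K(1,2) _ \<eta>'(2)] lip1_nonneg[OF K(1)] K(3,4) \<eta>'(1)
      by (simp add: \<eta>_def)
    ultimately show ?thesis by blast
  next
    case False
    then show ?thesis
      using diag_inf_pos by (intro exI[of _ 0]) (metis order_refl zero_less_one)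
  qed
qed

end
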